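(* Let $\Lambda=\{0,1,2\}^2\subset\mathbb{Z}^2$ and let $\mu$ be the probability measure on $\{0,1\}^\Lambda$ giving probability $1/7$ to each of the seven configurations whose sets of occupied sites are: $\{(1,1)\}$, $\{(1,0)\}$, $\{(2,1)\}$, $\{(1,2)\}$, $\{(0,1)\}$, $\{(0,2),(2,0)\}$, $\{(0,0),(2,2)\}$ (all other sites empty). Then $\mu$ is LTI and invariant under all symmetries of the square, but there is no probability measure on configurations of a $4\times4$ square $\Lambda'\supset\Lambda$ whose marginal on each $3\times3$ subsquare of $\Lambda'$ is the corresponding translate of $\mu$; in particular $\mu$ has no translation invariant extension to $\{0,1\}^{\mathbb{Z}^2}$.
   Context: A probability measure $\mu_\Lambda$ on $\{0,1\}^\Lambda$, $\Lambda\subset\mathbb{Z}^d$, is LTI if for all $A,A'\subset\Lambda$ with $A'$ a translate of $A$, the marginal on $\{0,1\}^{A'}$ is the translate of the marginal on $\{0,1\}^A$. Symmetries of the square are the eight dihedral symmetries of $\{0,1,2\}^2$. *)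

theory Defs
  imports "HOL-Probability.Probability"
begin

text \<open>A configuration in \<open>{0,1}^\<Lambda>\<close> is
  represented by its set of occupied sites (a subset of \<open>\<Lambda>\<close>). For finite \<open>\<Lambda>\<close>,
  a probability measure on \<open>{0,1}^\<Lambda>\<close> is a probability mass function \<open>p\<close> on
  subsets of \<open>\<Lambda>\<close>.\<close>

type_synonym site = "int \<times> int"

definition shift :: "site \<Rightarrow> site set \<Rightarrow> site set" where
  "shift v A = (\<lambda>x. (fst x + fst v, snd x + snd v)) ` A"

definition is_prob_on :: "site set \<Rightarrow> (site set \<Rightarrow> real) \<Rightarrow> bool" where
  "is_prob_on \<Lambda> p \<longleftrightarrow> finite \<Lambda> \<and> (\<forall>C. 0 \<le> p C) \<and> (\<forall>C. p C \<noteq> 0 \<longrightarrow> C \<subseteq> \<Lambda>)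
     \<and> (\<Sum>C\<in>Pow \<Lambda>. p C) = 1"

definition marginal :: "site set \<Rightarrow> (site set \<Rightarrow> real) \<Rightarrow> site set \<Rightarrow> site set \<Rightarrow> real" where
  "marginal \<Lambda> p A B = (\<Sum>C\<in>{C\<in>Pow \<Lambda>. C \<inter> A = B}. p C)"

definition LTI :: "site set \<Rightarrow> (site set \<Rightarrow> real) \<Rightarrow> bool" where
  "LTI \<Lambda> p \<longleftrightarrow> (\<forall>A v. A \<subseteq> \<Lambda> \<longrightarrow> shift v A \<subseteq> \<Lambda> \<longrightarrow>
      (\<forall>B. B \<subseteq> A \<longrightarrow> marginal \<Lambda> p (shift v A) (shift v B) = marginal \<Lambda> p A B))"

definition Lam :: "site set" where
  "Lam = {0..2} \<times> {0..2}"

definition square_syms :: "(site \<Rightarrow> site) set" where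
  "square_syms = {(\<lambda>(x,y). (x,y)), (\<lambda>(x,y). (2-x,y)), (\<lambda>(x,y). (x,2-y)), (\<lambda>(x,y). (2-x,2-y)),
                  (\<lambda>(x,y). (y,x)), (\<lambda>(x,y). (2-y,x)), (\<lambda>(x,y). (y,2-x)), (\<lambda>(x,y). (2-y,2-x))}"

definition mu :: "site set \<Rightarrow> real" where
  "mu C = (if C \<in> {{(1,1)}, {(1,0)}, {(2,1)}, {(1,2)}, {(0,1)}, {(0,2),(2,0)}, {(0,0),(2,2)}}
           then 1/7 else 0)"

definition square4 :: "int \<Rightarrow> int \<Rightarrow> site set" where
  "square4 a b = {a..a+3} \<times> {b..b+3}"

definition config_space :: "(site \<Rightarrow> bool) measure" where
  "config_space = PiM UNIV (\<lambda>_. count_space UNIV)"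

definition shift_config :: "site \<Rightarrow> (site \<Rightarrow> bool) \<Rightarrow> (site \<Rightarrow> bool)" where
  "shift_config v \<omega> = (\<lambda>x. \<omega> (fst x + fst v, snd x + snd v))"

end

theory Submission
  imports Defs
begin

text \<open>Call a configuration of a \<open>4\<times>4\<close> square admissible if each of its four \<open>3\<times>3\<close> windows
  shows one of the seven configurations charged by \<open>\<mu>\<close>. In an admissible configuration the
  lower-left window cannot show the pattern \<open>{(1,0)}\<close>: the windows to its right and above are
  then forced to show \<open>{(0,0),(2,2)}\<close> and \<open>{(1,2)}\<close>, which puts exactly \<open>(2,1)\<close> and \<open>(0,2)\<close>
  into the upper-right window, and no configuration of the support looks like that. A measure
  on the \<open>4\<times>4\<close> square (or a translation invariant one on \<open>\<int>\<^sup>2\<close>) with the prescribed \<open>3\<times>3\<close>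
  marginals lives on admissible configurations, so it gives probability \<open>0\<close> to a pattern
  that \<open>\<mu>\<close> charges with \<open>1/7\<close>. LTI and dihedral invariance of \<open>\<mu>\<close> are finite checks.\<close>

lemma Lam_eq: "Lam = {(0,0),(0,1),(0,2),(1,0),(1,1),(1,2),(2,0),(2,1),(2,2)}"
proof -
  have "{0..2::int} = {0,1,2}" by auto
  then show ?thesis unfolding Lam_def by auto
qed

lemma finite_Lam: "finite Lam"
  by (simp add: Lam_def)

definition mu_support :: "site set list" where
  "mu_support = [{(1,1)}, {(1,0)}, {(2,1)}, {(1,2)}, {(0,1)}, {(0,2),(2,0)}, {(0,0),(2,2)}]"

lemma mu_eq: "mu C = (if C \<in> set mu_support then 1/7 else 0)"
  by (simp add: mu_def mu_support_def)

lemma mu_support_subset_Lam: "C \<in> set mu_support \<Longrightarrow> C \<subseteq> Lam"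
  by (auto simp: mu_support_def Lam_def)

lemma distinct_mu_support: "distinct mu_support"
  by (auto simp: mu_support_def doubleton_eq_iff)

lemma mem_shift: "x \<in> shift v A \<longleftrightarrow> (fst x - fst v, snd x - snd v) \<in> A"
  unfolding shift_def
  by (cases x; cases v) (auto simp: image_iff intro!: bexI[of _ "(fst x - fst v, snd x - snd v)"])

lemma shift_empty: "shift v {} = {}"
  by (simp add: shift_def)

lemma shift_insert: "shift v (insert a X) = insert (fst a + fst v, snd a + snd v) (shift v X)"
  by (simp add: shift_def)

lemma inj_translation: "inj (\<lambda>x::site. (fst x + fst v, snd x + snd v))"
  by (auto simp: inj_on_def prod_eq_iff)

lemma shift_eq_iff: "shift v X = shift v Y \<longleftrightarrow> X = Y"
  unfolding shift_def by (simp add: inj_image_eq_iff[OF inj_translation])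

lemma shift_Int: "shift v (X \<inter> Y) = shift v X \<inter> shift v Y"
  unfolding shift_def by (simp add: image_Int[OF inj_translation])

lemma shift_shift_uminus: "shift (i,j) (shift (-i,-j) X) = X"
  unfolding shift_def by (force simp: image_image)

lemma shift_mono: "X \<subseteq> Y \<Longrightarrow> shift v X \<subseteq> shift v Y"
  unfolding shift_def by auto

lemma marginal_mu: "marginal Lam mu A B = (\<Sum>C\<leftarrow>mu_support. if C \<inter> A = B then 1/7 else 0)"
proof -
  have "marginal Lam mu A B = (\<Sum>C\<in>{C\<in>set mu_support. C \<inter> A = B}. mu C)"
    unfolding marginal_def
    by (rule sum.mono_neutral_right)
       (auto simp: finite_Lam mu_eq dest: mu_support_subset_Lam)
  also have "\<dots> = (\<Sum>C\<in>set mu_support. if C \<inter> A = B then mu C else 0)"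
    by (rule sum.inter_filter) simp
  also have "\<dots> = (\<Sum>C\<in>set mu_support. if C \<inter> A = B then 1/7 else 0)"
    by (intro sum.cong) (simp_all add: mu_eq)
  also have "\<dots> = (\<Sum>C\<leftarrow>mu_support. if C \<inter> A = B then 1/7 else 0)"
    by (simp add: sum_list_distinct_conv_sum_set distinct_mu_support)
  finally show ?thesis .
qed

lemma is_prob_on_mu: "is_prob_on Lam mu"
proof -
  have "(\<Sum>C\<in>Pow Lam. mu C) = marginal Lam mu {} {}"
    unfolding marginal_def by (simp add: Pow_def)
  also have "\<dots> = 1"
    unfolding marginal_mu by (simp add: mu_support_def)
  finally show ?thesis
    unfolding is_prob_on_def by (auto simp: finite_Lam mu_eq mu_support_subset_Lam)
qed

text \<open>As \<open>H\<close> is arbitrary, this says that the restrictions of the support to the window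
  \<open>shift v Lam\<close> and the translates by \<open>v\<close> of its restrictions to \<open>shift (-v) Lam\<close> agree as
  multisets.\<close>
lemma mu_support_restrictions_translate:
  fixes H :: "site set \<Rightarrow> real"
  assumes "i \<in> {-2,-1,0,1,2}" "j \<in> {-2,-1,0,1,2}"
  shows "(\<Sum>C\<leftarrow>mu_support. H (C \<inter> shift (i,j) Lam))
       = (\<Sum>C\<leftarrow>mu_support. H (shift (i,j) (C \<inter> shift (-i,-j) Lam)))"
  using assms
  by ((auto simp: mu_support_def Int_insert_left mem_shift Lam_def shift_insert shift_empty); linarith)

lemma translation_range:
  assumes "A \<subseteq> Lam" "shift (i,j) A \<subseteq> Lam" "A \<noteq> {}"
  shows "i \<in> {-2,-1,0,1,2}" "j \<in> {-2,-1,0,1,2}"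
proof -
  obtain x where "x \<in> A" using assms(3) by auto
  then have "x \<in> Lam" "(fst x + i, snd x + j) \<in> Lam"
    using assms(1,2) by (auto simp: shift_def)
  then show "i \<in> {-2,-1,0,1,2}" "j \<in> {-2,-1,0,1,2}"
    by (auto simp: Lam_def)
qed

lemma LTI_mu: "LTI Lam mu"
  unfolding LTI_def
proof (intro allI impI)
  fix A v B
  assume A: "A \<subseteq> Lam" and shA: "shift v A \<subseteq> Lam" and B: "B \<subseteq> A"
  obtain i j where v: "v = (i,j)" by (cases v)
  show "marginal Lam mu (shift v A) (shift v B) = marginal Lam mu A B"
  proof (cases "A = {}")
    case True
    then show ?thesis using B by (simp add: shift_empty)
  next
    case False
    note ij = translation_range[OF A shA[unfolded v] False]
    define H :: "site set \<Rightarrow> real" where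
      "H X = (if X \<inter> shift v A = shift v B then 1/7 else 0)" for X
    have "shift v A \<subseteq> shift v Lam" using A by (rule shift_mono)
    then have "marginal Lam mu (shift v A) (shift v B) = (\<Sum>C\<leftarrow>mu_support. H (C \<inter> shift v Lam))"
      unfolding marginal_mu H_def by (intro arg_cong[where f=sum_list] map_cong) auto
    also have "\<dots> = (\<Sum>C\<leftarrow>mu_support. H (shift v (C \<inter> shift (-i,-j) Lam)))"
      unfolding v by (rule mu_support_restrictions_translate[OF ij])
    also have "\<dots> = marginal Lam mu A B"
    proof -
      have "A \<subseteq> shift (-i,-j) Lam"
        using shift_mono[OF shA, of "(-i,-j)"] shift_shift_uminus[of "-i" "-j" A] v by simp
      then have "shift v (C \<inter> shift (-i,-j) Lam) \<inter> shift v A = shift v (C \<inter> A)" for C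
        by (simp add: shift_Int[symmetric] Int_assoc Int_absorb1)
      then show ?thesis
        unfolding marginal_mu H_def by (simp add: shift_eq_iff)
    qed
    finally show ?thesis .
  qed
qed

lemma square_sym_maps_mu_support:
  "g \<in> square_syms \<Longrightarrow> D \<in> set mu_support \<Longrightarrow> g ` D \<in> set mu_support"
  unfolding square_syms_def mu_support_def set_simps
  by (elim insertE emptyE; simp add: doubleton_eq_iff)

lemma inj_square_sym: "g \<in> square_syms \<Longrightarrow> inj g"
  by (auto simp: square_syms_def inj_on_def)

lemma mu_square_sym_invariant:
  assumes g: "g \<in> square_syms"
  shows "mu (g ` C) = mu C"
proof -
  have inj: "inj g" by (rule inj_square_sym[OF g])
  have "inj_on (image g) (set mu_support)"
    using inj by (auto simp: inj_on_def inj_image_eq_iff)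
  moreover have "image g ` set mu_support \<subseteq> set mu_support"
    using square_sym_maps_mu_support[OF g] by auto
  ultimately have perm: "image g ` set mu_support = set mu_support"
    by (intro card_subset_eq) (simp_all add: card_image)
  have "g ` C \<in> set mu_support \<longleftrightarrow> C \<in> set mu_support"
  proof
    assume "g ` C \<in> set mu_support"
    then obtain D where "D \<in> set mu_support" "g ` C = g ` D"
      by (metis perm imageE)
    then show "C \<in> set mu_support" using inj by (simp add: inj_image_eq_iff)
  qed (rule square_sym_maps_mu_support[OF g])
  then show ?thesis by (simp add: mu_eq)
qed

subsection \<open>The forbidden overlap\<close>

definition window :: "site \<Rightarrow> (site \<Rightarrow> bool) \<Rightarrow> site set" where
  "window v \<omega> = {x\<in>Lam. \<omega> (fst x + fst v, snd x + snd v)}"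

lemma window_subset_Lam: "window v \<omega> \<subseteq> Lam"
  by (auto simp: window_def)

lemma window_eq_iff:
  "B \<subseteq> Lam \<Longrightarrow> window v \<omega> = B \<longleftrightarrow> (\<forall>x\<in>Lam. \<omega> (fst x + fst v, snd x + snd v) = (x \<in> B))"
  unfolding window_def by auto

lemma window_in_mu_support_iff:
  "window v \<omega> \<in> set mu_support \<longleftrightarrow>
     (\<exists>B\<in>set mu_support. \<forall>x\<in>Lam. \<omega> (fst x + fst v, snd x + snd v) = (x \<in> B))"
proof -
  have "window v \<omega> \<in> set mu_support \<longleftrightarrow> (\<exists>B\<in>set mu_support. window v \<omega> = B)"
    by auto
  also have "\<dots> \<longleftrightarrow> (\<exists>B\<in>set mu_support. \<forall>x\<in>Lam. \<omega> (fst x + fst v, snd x + snd v) = (x \<in> B))"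
    by (rule bex_cong[OF refl], rule window_eq_iff[OF mu_support_subset_Lam])
  finally show ?thesis .
qed

lemma window_translate: "window (fst v + a, snd v + b) \<omega> = window v (\<lambda>x. \<omega> (fst x + a, snd x + b))"
  unfolding window_def by (simp add: add.assoc)

lemma shift_window: "shift v (window v \<omega>) = {y \<in> shift v Lam. \<omega> y}"
  unfolding window_def by (auto simp: mem_shift)

lemma Int_shift_Lam_eq_window: "C \<inter> shift v Lam = shift v (window v (\<lambda>x. x \<in> C))"
  unfolding shift_window by auto

lemma window_origin_not_bottom_middle:
  assumes right: "window (1,0) \<omega> \<in> set mu_support"
    and up: "window (0,1) \<omega> \<in> set mu_support"
    and diag: "window (1,1) \<omega> \<in> set mu_support"
  shows "window (0,0) \<omega> \<noteq> {(1,0)}"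
proof
  assume "window (0,0) \<omega> = {(1,0)}"
  then have "\<not> \<omega> (0,0)" "\<not> \<omega> (0,1)" "\<not> \<omega> (0,2)" "\<omega> (1,0)" "\<not> \<omega> (1,1)" "\<not> \<omega> (1,2)"
     "\<not> \<omega> (2,0)" "\<not> \<omega> (2,1)" "\<not> \<omega> (2,2)"
    using window_eq_iff[of "{(1,0)}" "(0,0)" \<omega>] by (simp_all add: Lam_eq)
  moreover from right this have "\<not> \<omega> (3,0)" "\<not> \<omega> (3,1)" "\<omega> (3,2)"
    unfolding window_in_mu_support_iff by (simp_all add: mu_support_def Lam_eq)
  moreover from up calculation have "\<not> \<omega> (0,3)" "\<omega> (1,3)" "\<not> \<omega> (2,3)"
    unfolding window_in_mu_support_iff by (simp_all add: mu_support_def Lam_eq)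
  ultimately show False
    using diag unfolding window_in_mu_support_iff by (simp add: mu_support_def Lam_eq)
qed

lemma window_not_bottom_middle:
  assumes "window (a+1,b) \<omega> \<in> set mu_support" "window (a,b+1) \<omega> \<in> set mu_support"
    "window (a+1,b+1) \<omega> \<in> set mu_support"
  shows "window (a,b) \<omega> \<noteq> {(1,0)}"
  using assms window_origin_not_bottom_middle[of "\<lambda>x. \<omega> (fst x + a, snd x + b)"]
    window_translate[of "(0,0)" a b \<omega>] window_translate[of "(1,0)" a b \<omega>]
    window_translate[of "(0,1)" a b \<omega>] window_translate[of "(1,1)" a b \<omega>]
  by (simp add: add.commute)

subsection \<open>No extension to a \<open>4\<times>4\<close> square\<close>

lemma le_marginal:
  assumes "is_prob_on \<Lambda> q" "C \<subseteq> \<Lambda>"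
  shows "q C \<le> marginal \<Lambda> q A (C \<inter> A)"
  using assms unfolding marginal_def is_prob_on_def
  by (intro member_le_sum) auto

lemma no_extension_to_square4:
  assumes q: "is_prob_on (square4 a b) q"
    and marg: "\<forall>v. shift v Lam \<subseteq> square4 a b \<longrightarrow> (\<forall>B. B \<subseteq> Lam \<longrightarrow>
             marginal (square4 a b) q (shift v Lam) (shift v B) = mu B)"
  shows False
proof -
  let ?sq = "square4 a b"
  have windows_inside: "shift v Lam \<subseteq> ?sq" if "v \<in> {(a,b),(a+1,b),(a,b+1),(a+1,b+1)}" for v
    using that by (auto simp: subset_iff mem_shift Lam_def square4_def)
  have admissible: "window v (\<lambda>x. x \<in> C) \<in> set mu_support"
    if C: "C \<subseteq> ?sq" "q C \<noteq> 0" and v: "v \<in> {(a,b),(a+1,b),(a,b+1),(a+1,b+1)}" for C v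
  proof -
    let ?B = "window v (\<lambda>x. x \<in> C)"
    have "q C \<le> marginal ?sq q (shift v Lam) (shift v ?B)"
      using le_marginal[OF q C(1), of "shift v Lam"] by (simp add: Int_shift_Lam_eq_window)
    also have "\<dots> = mu ?B"
      using marg windows_inside[OF v] window_subset_Lam by blast
    finally have "mu ?B \<noteq> 0"
      using C(2) q unfolding is_prob_on_def by (metis order.antisym)
    then show ?thesis by (simp add: mu_eq split: if_splits)
  qed
  have "marginal ?sq q (shift (a,b) Lam) (shift (a,b) {(1,0)}) = 0"
    unfolding marginal_def
  proof (intro sum.neutral ballI)
    fix C assume "C \<in> {C \<in> Pow ?sq. C \<inter> shift (a,b) Lam = shift (a,b) {(1,0)}}"
    then have C: "C \<subseteq> ?sq" and pattern: "window (a,b) (\<lambda>x. x \<in> C) = {(1,0)}"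
      by (simp_all add: Int_shift_Lam_eq_window shift_eq_iff)
    show "q C = 0"
    proof (rule ccontr)
      assume "q C \<noteq> 0"
      then have "window (a,b) (\<lambda>x. x \<in> C) \<noteq> {(1,0)}"
        by (intro window_not_bottom_middle admissible[OF C]) simp_all
      with pattern show False by simp
    qed
  qed
  moreover have "marginal ?sq q (shift (a,b) Lam) (shift (a,b) {(1,0)}) = mu {(1,0)}"
    using marg windows_inside[of "(a,b)"] by (simp add: Lam_def)
  ultimately show False by (simp add: mu_def)
qed

subsection \<open>No translation invariant extension to \<open>\<int>\<^sup>2\<close>\<close>

lemma sets_Lam_restriction: "{\<omega> \<in> space config_space. P {x\<in>Lam. \<omega> x}} \<in> sets config_space"
proof -
  have "P {x\<in>Lam. \<omega> x} \<longleftrightarrow> (\<exists>B\<in>{B\<in>Pow Lam. P B}. \<forall>x\<in>Lam. \<omega> x = (x \<in> B))" for \<omega>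
  proof
    assume "P {x\<in>Lam. \<omega> x}"
    then show "\<exists>B\<in>{B\<in>Pow Lam. P B}. \<forall>x\<in>Lam. \<omega> x = (x \<in> B)"
      by (intro bexI[of _ "{x\<in>Lam. \<omega> x}"]) auto
  next
    assume "\<exists>B\<in>{B\<in>Pow Lam. P B}. \<forall>x\<in>Lam. \<omega> x = (x \<in> B)"
    then obtain B where "B \<subseteq> Lam" "P B" "\<forall>x\<in>Lam. \<omega> x = (x \<in> B)" by auto
    moreover from this have "{x\<in>Lam. \<omega> x} = B" by auto
    ultimately show "P {x\<in>Lam. \<omega> x}" by simp
  qed
  moreover have "Measurable.pred config_space (\<lambda>\<omega>. \<exists>B\<in>{B\<in>Pow Lam. P B}. \<forall>x\<in>Lam. \<omega> x = (x \<in> B))"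
    unfolding config_space_def
    by (intro pred_intros_finite pred_count_space_const1 measurable_component_singleton)
       (simp_all add: finite_Lam)
  ultimately show ?thesis by (simp add: Measurable.pred_def)
qed

lemma measurable_shift_config: "shift_config v \<in> measurable config_space config_space"
  unfolding shift_config_def config_space_def
  by (rule measurable_PiM_single') (auto intro: measurable_component_singleton)

lemma AE_invariant_map:
  assumes "f \<in> measurable M M" "distr M M f = M" "{\<omega> \<in> space M. P \<omega>} \<in> sets M"
    "AE \<omega> in M. P \<omega>"
  shows "AE \<omega> in M. P (f \<omega>)"
  using assms AE_distr_iff[of f M M P] by metis

lemma no_shift_invariant_extension:
  assumes "prob_space M" and sets: "sets M = sets config_space"
    and inv: "\<forall>v. distr M M (shift_config v) = M"
    and marg: "\<forall>B. B \<subseteq> Lam \<longrightarrow> measure M {\<omega>\<in>space M. {x\<in>Lam. \<omega> x} = B} = mu B"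
  shows False
proof -
  interpret prob_space M by fact
  have space: "space M = space config_space"
    using sets by (rule sets_eq_imp_space_eq)
  have event: "{\<omega>\<in>space M. P {x\<in>Lam. \<omega> x}} \<in> sets M" for P
    using sets_Lam_restriction[of P] sets space by simp
  have "(\<Union>B\<in>Pow Lam - set mu_support. {\<omega>\<in>space M. {x\<in>Lam. \<omega> x} = B}) \<in> null_sets M"
    using marg event by (intro null_sets_UN' countable_finite)
       (auto simp: finite_Lam null_sets_def emeasure_eq_measure mu_eq)
  then have admissible: "AE \<omega> in M. {x\<in>Lam. \<omega> x} \<in> set mu_support"
    by (rule AE_I') auto
  have "shift_config v \<in> measurable M M" for v
    using measurable_shift_config measurable_cong_sets[OF sets sets] by simp
  then have "AE \<omega> in M. {x\<in>Lam. shift_config v \<omega> x} \<in> set mu_support" for v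
    by (rule AE_invariant_map[OF _ inv[rule_format] event admissible])
  then have window_admissible: "AE \<omega> in M. window v \<omega> \<in> set mu_support" for v
    by (simp add: window_def shift_config_def)
  have "AE \<omega> in M. window (0,0) \<omega> \<noteq> {(1,0)}"
    using window_admissible[of "(1,0)"] window_admissible[of "(0,1)"] window_admissible[of "(1,1)"]
    by eventually_elim (rule window_origin_not_bottom_middle)
  then have "emeasure M {\<omega>\<in>space M. {x\<in>Lam. \<omega> x} = {(1,0)}} = 0"
    by (subst (asm) AE_iff_measurable[OF event[of "\<lambda>X. X = {(1,0)}"]]) (simp_all add: window_def)
  moreover have "measure M {\<omega>\<in>space M. {x\<in>Lam. \<omega> x} = {(1,0)}} = 1/7"
    using marg by (simp add: Lam_def mu_def)
  ultimately show False by (simp add: emeasure_eq_measure)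
qed

theorem mainTheorem14:
  shows "is_prob_on Lam mu \<and> LTI Lam mu
    \<and> (\<forall>g\<in>square_syms. \<forall>C. mu (g ` C) = mu C)
    \<and> (\<forall>a b. Lam \<subseteq> square4 a b \<longrightarrow>
         \<not> (\<exists>q. is_prob_on (square4 a b) q \<and>
               (\<forall>v. shift v Lam \<subseteq> square4 a b \<longrightarrow>
                  (\<forall>B. B \<subseteq> Lam \<longrightarrow>
                     marginal (square4 a b) q (shift v Lam) (shift v B) = mu B))))
    \<and> \<not> (\<exists>M. prob_space M \<and> sets M = sets config_space
            \<and> (\<forall>v. distr M M (shift_config v) = M)
            \<and> (\<forall>B. B \<subseteq> Lam \<longrightarrow> measure M {\<omega>\<in>space M. {x\<in>Lam. \<omega> x} = B} = mu B))"
proof (intro conjI ballI allI impI notI is_prob_on_mu LTI_mu mu_square_sym_invariant)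
  fix a b assume "\<exists>q. is_prob_on (square4 a b) q \<and>
    (\<forall>v. shift v Lam \<subseteq> square4 a b \<longrightarrow> (\<forall>B. B \<subseteq> Lam \<longrightarrow>
       marginal (square4 a b) q (shift v Lam) (shift v B) = mu B))"
  then show False by (blast intro: no_extension_to_square4)
next
  assume "\<exists>M. prob_space M \<and> sets M = sets config_space \<and> (\<forall>v. distr M M (shift_config v) = M)
    \<and> (\<forall>B. B \<subseteq> Lam \<longrightarrow> measure M {\<omega>\<in>space M. {x\<in>Lam. \<omega> x} = B} = mu B)"
  then show False by (blast intro: no_shift_invariant_extension)
qed

end
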